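(* In the setting of Top Half Sampling, run with an optimal Natural LP solution $(x_{ij})$ of value $\textsc{Opt}$ on an edge-weighted instance with free disposal, define $\bar A(t)=\textsc{Opt}-A(t)$, where $A(t)$ is the algorithm's objective right before time $t$. Then \[ \frac{d}{dt}\mathbf{E}\,\bar A(t)\Big|_{t=0}\le -\textsc{Opt}. \]
   Context: Poisson arrival model: $I$ is a finite set of online types and $J$ a finite set of offline vertices, with edges $E$, $J_i$ the neighbors of type $i$, and weights $w_{ij}>0$. Type $i$ arrives by an independent Poisson process of rate $\lambda_i>0$ on $[0,1]$. Under free disposal only the heaviest edge matched to each offline vertex counts. Natural LP: maximize $\sum w_{ij}x_{ij}$ subject to $x\ge0$, $\sum_{j\in J_i}x_{ij}\le\lambda_i$, and $\sum_{i\in S}x_{ij}\le 1-e^{-\sum_{i\in S}\lambda_i}$ for all $j$ and all $S$ of neighbors of $j$. Top Half Sampling: with $w_j(t)$ the max weight matched to $j$ before $t$ ($0$ if none) and $w_{ij}(t)=\max\{w_{ij}-w_j(t),0\}$, order $J_i$ by non-increasing $w_{ij}(t)$. Let $\sigma_{i,t}(\theta)$ be the neighbor whose cumulative $x_{ij}$-interval in this order contains $\theta$, and $\perp$ (unmatched) if $\theta\ge\sum_jx_{ij}$. A type-$i$ arrival at time $t$ samples $\theta\sim U[0,\lambda_i/2)$ and is matched to $\sigma_{i,t}(\theta)$. *)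

theory Defs
  imports "HOL-Analysis.Analysis"
begin

definition nbrs :: "('i \<times> 'j) set \<Rightarrow> 'i \<Rightarrow> 'j set" where
  "nbrs E i = {j. (i, j) \<in> E}"

definition lp_feasible ::
  "'i set \<Rightarrow> 'j set \<Rightarrow> ('i \<times> 'j) set \<Rightarrow> ('i \<Rightarrow> real) \<Rightarrow> ('i \<Rightarrow> 'j \<Rightarrow> real) \<Rightarrow> bool" where
  "lp_feasible I J E lam x \<longleftrightarrow>
     (\<forall>(i, j) \<in> E. 0 \<le> x i j) \<and>
     (\<forall>i \<in> I. (\<Sum>j \<in> nbrs E i. x i j) \<le> lam i) \<and>
     (\<forall>j \<in> J. \<forall>S. S \<subseteq> {i. (i, j) \<in> E} \<longrightarrow>
        (\<Sum>i \<in> S. x i j) \<le> 1 - exp (- (\<Sum>i \<in> S. lam i)))"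

definition lp_value :: "('i \<times> 'j) set \<Rightarrow> ('i \<Rightarrow> 'j \<Rightarrow> real) \<Rightarrow> ('i \<Rightarrow> 'j \<Rightarrow> real) \<Rightarrow> real" where
  "lp_value E w x = (\<Sum>(i, j) \<in> E. w i j * x i j)"

definition lp_optimal ::
  "'i set \<Rightarrow> 'j set \<Rightarrow> ('i \<times> 'j) set \<Rightarrow> ('i \<Rightarrow> real) \<Rightarrow> ('i \<Rightarrow> 'j \<Rightarrow> real) \<Rightarrow> ('i \<Rightarrow> 'j \<Rightarrow> real) \<Rightarrow> bool" where
  "lp_optimal I J E lam w x \<longleftrightarrow> lp_feasible I J E lam x \<and>
     (\<forall>y. lp_feasible I J E lam y \<longrightarrow> lp_value E w y \<le> lp_value E w x)"

text \<open>A state is the function st with st j = w_j(t), the heaviest weight matched to j so far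
  (0 if none).  Under free disposal the objective of a state is the sum of these.\<close>

definition gain :: "('i \<Rightarrow> 'j \<Rightarrow> real) \<Rightarrow> ('j \<Rightarrow> real) \<Rightarrow> 'i \<Rightarrow> 'j \<Rightarrow> real" where
  "gain w st i j = max (w i j - st j) 0"

text \<open>An ordering rule (tie-breaking arbitrary): for each type i and state, a list enumerating
  the neighbours J_i exactly once, in non-increasing order of the reduced weights w_ij(t).\<close>

definition valid_order ::
  "'i set \<Rightarrow> ('i \<times> 'j) set \<Rightarrow> ('i \<Rightarrow> 'j \<Rightarrow> real) \<Rightarrow> ('i \<Rightarrow> ('j \<Rightarrow> real) \<Rightarrow> 'j list) \<Rightarrow> bool" where
  "valid_order I E w ord \<longleftrightarrow>
     (\<forall>i \<in> I. \<forall>st. distinct (ord i st) \<and> set (ord i st) = nbrs E i \<and>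
        sorted_wrt (\<lambda>a b. gain w st i b \<le> gain w st i a) (ord i st))"

text \<open>sel x i L theta: the element of L whose cumulative x_ij-interval (in the order of L)
  contains theta; None (unmatched) if theta is beyond the total mass.\<close>

fun sel :: "('i \<Rightarrow> 'j \<Rightarrow> real) \<Rightarrow> 'i \<Rightarrow> 'j list \<Rightarrow> real \<Rightarrow> 'j option" where
  "sel x i [] \<theta> = None"
| "sel x i (j # js) \<theta> = (if \<theta> < x i j then Some j else sel x i js (\<theta> - x i j))"

definition sigma ::
  "('i \<Rightarrow> 'j \<Rightarrow> real) \<Rightarrow> ('i \<Rightarrow> ('j \<Rightarrow> real) \<Rightarrow> 'j list) \<Rightarrow> 'i \<Rightarrow> ('j \<Rightarrow> real) \<Rightarrow> real \<Rightarrow> 'j option" where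
  "sigma x ord i st \<theta> = sel x i (ord i st) \<theta>"

text \<open>Effect of one arrival of type i with sample theta (free disposal: only the heaviest
  matched edge counts).\<close>

definition ths_step ::
  "('i \<Rightarrow> 'j \<Rightarrow> real) \<Rightarrow> ('i \<Rightarrow> 'j \<Rightarrow> real) \<Rightarrow> ('i \<Rightarrow> ('j \<Rightarrow> real) \<Rightarrow> 'j list) \<Rightarrow>
     ('j \<Rightarrow> real) \<Rightarrow> 'i \<Rightarrow> real \<Rightarrow> ('j \<Rightarrow> real)" where
  "ths_step w x ord st i \<theta> =
     (case sigma x ord i st \<theta> of None \<Rightarrow> st | Some j \<Rightarrow> st(j := max (st j) (w i j)))"

text \<open>ths_V ... n st: expected objective after n further arrivals starting from state st,
  where each arrival is independently of type i with probability lam i / Lambda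
  (Lambda = total rate) and samples theta uniformly from [0, lam i / 2).\<close>

primrec ths_V ::
  "'i set \<Rightarrow> 'j set \<Rightarrow> ('i \<Rightarrow> real) \<Rightarrow> ('i \<Rightarrow> 'j \<Rightarrow> real) \<Rightarrow> ('i \<Rightarrow> 'j \<Rightarrow> real) \<Rightarrow>
     ('i \<Rightarrow> ('j \<Rightarrow> real) \<Rightarrow> 'j list) \<Rightarrow> nat \<Rightarrow> ('j \<Rightarrow> real) \<Rightarrow> real" where
  "ths_V I J lam w x ord 0 st = (\<Sum>j \<in> J. st j)"
| "ths_V I J lam w x ord (Suc n) st =
     (\<Sum>i \<in> I. (lam i / (\<Sum>k \<in> I. lam k)) *
        (integral {0..lam i / 2} (\<lambda>\<theta>. ths_V I J lam w x ord n (ths_step w x ord st i \<theta>)) / (lam i / 2)))"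

text \<open>Expected objective A(t) right before time t: the arrivals in [0,t) form a Poisson number
  (mean Lambda * t) of independent arrivals with i.i.d. types (superposition of the independent
  Poisson processes of rates lam i), processed in order starting from the empty matching.\<close>

definition ths_expected_A ::
  "'i set \<Rightarrow> 'j set \<Rightarrow> ('i \<Rightarrow> real) \<Rightarrow> ('i \<Rightarrow> 'j \<Rightarrow> real) \<Rightarrow> ('i \<Rightarrow> 'j \<Rightarrow> real) \<Rightarrow>
     ('i \<Rightarrow> ('j \<Rightarrow> real) \<Rightarrow> 'j list) \<Rightarrow> real \<Rightarrow> real" where
  "ths_expected_A I J lam w x ord t =
     (let \<Lambda> = (\<Sum>k \<in> I. lam k) in
      (\<Sum>n. exp (- \<Lambda> * t) * (\<Lambda> * t) ^ n / fact n * ths_V I J lam w x ord n (\<lambda>_. 0)))"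

end

(*
  Given the number of arrivals, the expected objective is a Poisson mixture of the bounded
  values V_n of n arrivals from the empty matching, so its derivative at 0 is
  Lambda * (V_1 - V_0) = Lambda * V_1: the total rate times the expected gain of the first
  arrival. A type-i arrival gains the weight of the neighbour whose x_ij-interval contains
  theta, sampled from [0, lam_i / 2). The neighbours are sorted by non-increasing weight and
  their intervals have total length at most lam_i, so the average over this top half is at
  least the overall average: lam_i times the expected gain is at least sum_j w_ij x_ij.
  Summing over i gives Lambda * V_1 >= OPT.
*)

theory Submission
  imports Defs
begin

definition sel_value :: "('i \<Rightarrow> 'j \<Rightarrow> real) \<Rightarrow> 'i \<Rightarrow> ('j \<Rightarrow> real) \<Rightarrow> 'j list \<Rightarrow> real \<Rightarrow> real" where
  "sel_value x i v L \<theta> = (case sel x i L \<theta> of None \<Rightarrow> 0 | Some j \<Rightarrow> v j)"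

lemma sel_in_set: "sel x i L \<theta> = Some j \<Longrightarrow> j \<in> set L"
  by (induction L arbitrary: \<theta>) (auto split: if_splits)

lemma sel_value_Nil [simp]: "sel_value x i v [] \<theta> = 0"
  by (simp add: sel_value_def)

lemma sel_value_Cons:
  "sel_value x i v (j # js) \<theta> = (if \<theta> < x i j then v j else sel_value x i v js (\<theta> - x i j))"
  by (simp add: sel_value_def)

lemma has_integral_sel_value_Cons_head:
  assumes "0 \<le> a" "a \<le> x i j"
  shows "(sel_value x i v (j # js) has_integral a * v j) {0..a}"
proof -
  have "((\<lambda>_. v j) has_integral a * v j) {0..a}"
    using has_integral_const_real[of "v j" 0 a] assms(1) by simp
  then show ?thesis
    by (rule has_integral_spike_finite[where S="{a}", rotated 2]) (use assms in \<open>auto simp: sel_value_Cons\<close>)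
qed

lemma has_integral_sel_value_Cons_tail:
  assumes "0 \<le> x i j" "x i j < a"
    and "(sel_value x i v js has_integral Y) {0..a - x i j}"
  shows "(sel_value x i v (j # js) has_integral x i j * v j + Y) {0..a}"
proof -
  have head: "(sel_value x i v (j # js) has_integral x i j * v j) {0..x i j}"
    using has_integral_sel_value_Cons_head[of "x i j" x i j v js] assms(1) by (simp add: mult.commute)
  have "((\<lambda>\<theta>. sel_value x i v js (\<theta> - x i j)) \<circ> (+) (x i j) has_integral Y) {0..a - x i j}"
    using assms(3) by (simp add: o_def)
  then have "((\<lambda>\<theta>. sel_value x i v js (\<theta> - x i j)) has_integral Y) {x i j..a}"
    unfolding has_integral_shift_Icc_real by simp
  then have tail: "(sel_value x i v (j # js) has_integral Y) {x i j..a}"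
    by (rule has_integral_spike_finite[where S="{x i j}", rotated 2]) (auto simp: sel_value_Cons)
  show ?thesis
    using has_integral_combine[OF assms(1) _ head tail] assms(2) by simp
qed

lemma prefix_integral_step_ineq:
  fixes x v m S W Y :: real
  assumes "0 \<le> x" "0 \<le> m" "m \<le> S" "W \<le> v * S" "m * W \<le> S * Y" "0 \<le> Y"
  shows "(x + m) * (v * x + W) \<le> (x + S) * (x * v + Y)"
proof -
  have gap: "W + m * v \<le> Y + S * v"
  proof (cases "S = 0")
    case True
    then show ?thesis using assms by simp
  next
    case False
    have "(S - m) * (W - v * S) \<le> 0"
      using assms(3,4) by (intro mult_nonneg_nonpos) auto
    then have "S * (W + m * v) \<le> S * (Y + S * v)"
      using assms(5) by (simp add: algebra_simps)
    then show ?thesis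
      using False assms(2,3) by (simp add: mult_le_cancel_left)
  qed
  have "x * (W + m * v) \<le> x * (Y + S * v)"
    using gap assms(1) by (rule mult_left_mono)
  then show ?thesis
    using assms(5) by (simp add: algebra_simps)
qed

text \<open>The function \<open>a \<mapsto> \<integral>\<^sub>0\<^sup>a\<close> of a non-increasing step function is concave, hence
  lies above its chord from \<open>0\<close> to the total length \<open>S\<close>.\<close>

lemma sel_value_prefix_integral:
  assumes "\<forall>j\<in>set L. 0 \<le> x i j" "\<forall>j\<in>set L. 0 \<le> v j"
    and "sorted_wrt (\<lambda>a b. v b \<le> v a) L" and "0 \<le> a"
  shows "\<exists>Y. (sel_value x i v L has_integral Y) {0..a} \<and> 0 \<le> Y \<and>
    min a (\<Sum>j\<leftarrow>L. x i j) * (\<Sum>j\<leftarrow>L. v j * x i j) \<le> (\<Sum>j\<leftarrow>L. x i j) * Y"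
  using assms
proof (induction L arbitrary: a)
  case Nil
  then show ?case by auto
next
  case (Cons j js)
  define S where "S = (\<Sum>k\<leftarrow>js. x i k)"
  define W where "W = (\<Sum>k\<leftarrow>js. v k * x i k)"
  have xj: "0 \<le> x i j" and vj: "0 \<le> v j"
    using Cons.prems by auto
  have S_nonneg: "0 \<le> S"
    unfolding S_def using Cons.prems(1) by (intro sum_list_nonneg) auto
  have "W \<le> (\<Sum>k\<leftarrow>js. v j * x i k)"
    unfolding W_def using Cons.prems by (intro sum_list_mono mult_right_mono) auto
  then have W_le: "W \<le> v j * S"
    by (simp add: S_def sum_list_const_mult)
  show ?case
  proof (cases "a \<le> x i j")
    case True
    have "a * (v j * x i j + W) \<le> a * (v j * (x i j + S))"
      using W_le Cons.prems(4) by (intro mult_left_mono) (auto simp: algebra_simps)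
    then have "min a (x i j + S) * (v j * x i j + W) \<le> (x i j + S) * (a * v j)"
      using True S_nonneg by (simp add: algebra_simps)
    then show ?thesis
      using has_integral_sel_value_Cons_head[where x=x and i=i, OF Cons.prems(4) True] vj Cons.prems(4)
      unfolding S_def W_def by (intro exI[of _ "a * v j"]) auto
  next
    case False
    obtain Y where Y: "(sel_value x i v js has_integral Y) {0..a - x i j}" "0 \<le> Y"
      "min (a - x i j) S * W \<le> S * Y"
      using Cons.IH[of "a - x i j"] Cons.prems False unfolding S_def W_def by auto
    have "min a (x i j + S) = x i j + min (a - x i j) S"
      by simp
    moreover have "(x i j + min (a - x i j) S) * (v j * x i j + W) \<le> (x i j + S) * (x i j * v j + Y)"
      using False Y(2,3) S_nonneg by (intro prefix_integral_step_ineq xj W_le) auto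
    ultimately show ?thesis
      using has_integral_sel_value_Cons_tail[OF xj _ Y(1)] False xj vj Y(2)
      unfolding S_def W_def by (intro exI[of _ "x i j * v j + Y"]) auto
  qed
qed

lemma sel_value_top_half:
  assumes "\<forall>j\<in>set L. 0 \<le> x i j" "\<forall>j\<in>set L. 0 \<le> v j"
    and "sorted_wrt (\<lambda>a b. v b \<le> v a) L" and "(\<Sum>j\<leftarrow>L. x i j) \<le> l"
  shows "(\<Sum>j\<leftarrow>L. v j * x i j) \<le> 2 * integral {0..l / 2} (sel_value x i v L)"
proof -
  define S where "S = (\<Sum>j\<leftarrow>L. x i j)"
  define W where "W = (\<Sum>j\<leftarrow>L. v j * x i j)"
  have S_nonneg: "0 \<le> S"
    unfolding S_def using assms(1) by (intro sum_list_nonneg) auto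
  obtain Y where Y: "(sel_value x i v L has_integral Y) {0..l / 2}" "0 \<le> Y" "min (l / 2) S * W \<le> S * Y"
    using sel_value_prefix_integral[where x=x and i=i and a="l / 2", OF assms(1-3)] assms(4) S_nonneg
    unfolding S_def W_def by auto
  have "W \<le> 2 * Y"
  proof (cases "S \<le> l / 2")
    case True
    show ?thesis
    proof (cases "S = 0")
      case True
      then have "\<forall>j\<in>set L. x i j = 0"
        using assms(1) sum_list_nonneg_eq_0_iff[of "map (x i) L"] by (auto simp: S_def)
      then have "W = 0"
        unfolding W_def by (induction L) auto
      then show ?thesis
        using Y(2) by simp
    next
      case False
      then have "W \<le> Y"
        using True Y(3) S_nonneg by (simp add: mult_le_cancel_left)
      then show ?thesis using Y(2) by simp
    qed
  next
    case False
    then have "l / 2 * W \<le> S * Y"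
      using Y(3) by simp
    also have "\<dots> \<le> l * Y"
      using assms(4) Y(2) unfolding S_def by (rule mult_right_mono)
    finally have "l * W \<le> l * (2 * Y)"
      by simp
    moreover have "0 < l"
      using False S_nonneg assms(4) unfolding S_def by linarith
    ultimately show ?thesis
      by simp
  qed
  then show ?thesis
    using integral_unique[OF Y(1)] by (simp add: W_def)
qed

lemma sum_ths_step:
  assumes "finite J" "set (ord i st) \<subseteq> J"
  shows "(\<Sum>j\<in>J. ths_step w x ord st i \<theta> j) = (\<Sum>j\<in>J. st j) + sel_value x i (gain w st i) (ord i st) \<theta>"
proof (cases "sigma x ord i st \<theta>")
  case None
  then show ?thesis
    by (simp add: ths_step_def sel_value_def sigma_def)
next
  case (Some j)
  have "j \<in> J"
    using sel_in_set[OF Some[unfolded sigma_def]] assms(2) by blast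
  have "ths_step w x ord st i \<theta> = (\<lambda>k. st k + (if k = j then gain w st i j else 0))"
    using Some by (auto simp: ths_step_def gain_def sigma_def fun_eq_iff max_def)
  then show ?thesis
    using Some \<open>j \<in> J\<close> assms(1) by (simp add: sum.distrib sel_value_def sigma_def)
qed

lemma ths_step_bounded:
  assumes "valid_order I E w ord" "i \<in> I" "\<forall>(i, j)\<in>E. w i j \<le> M" "\<forall>j. st j \<in> {0..M}"
  shows "ths_step w x ord st i \<theta> j \<in> {0..M}"
proof (cases "sigma x ord i st \<theta>")
  case None
  then show ?thesis
    using assms(4) by (simp add: ths_step_def)
next
  case (Some k)
  have "k \<in> nbrs E i"
    using sel_in_set[OF Some[unfolded sigma_def]] assms(1,2) unfolding valid_order_def by blast
  then have "w i k \<le> M"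
    using assms(3) by (auto simp: nbrs_def)
  then show ?thesis
    using Some assms(4) by (auto simp: ths_step_def le_max_iff_disj)
qed

lemma integral_average_in_interval:
  fixes f :: "real \<Rightarrow> real"
  assumes "0 < c" "\<And>t. t \<in> {0..c} \<Longrightarrow> f t \<in> {0..B}"
  shows "integral {0..c} f / c \<in> {0..B}"
proof (cases "f integrable_on {0..c}")
  case True
  have "0 \<le> integral {0..c} f"
    using True assms(2) by (intro integral_nonneg) auto
  moreover have "integral {0..c} f \<le> integral {0..c} (\<lambda>_. B)"
    using True assms(2) by (intro integral_le) auto
  ultimately show ?thesis
    using assms(1) by (simp add: divide_le_eq mult.commute)
next
  case False
  have "0 \<le> B"
    using assms by fastforce
  then show ?thesis
    using False by (simp add: not_integrable_integral)
qed

lemma weighted_average_in_interval: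
  fixes lam g :: "'a \<Rightarrow> real"
  assumes "finite I" "\<forall>i\<in>I. 0 < lam i" "\<forall>i\<in>I. g i \<in> {0..B}" "0 \<le> B"
  shows "(\<Sum>i\<in>I. lam i / (\<Sum>k\<in>I. lam k) * g i) \<in> {0..B}"
proof (cases "I = {}")
  case True
  then show ?thesis using assms(4) by simp
next
  case False
  have "0 < (\<Sum>k\<in>I. lam k)"
    using False assms(1,2) by (intro sum_pos) auto
  then have "(\<Sum>i\<in>I. lam i / (\<Sum>k\<in>I. lam k)) = 1"
    by (simp add: sum_divide_distrib[symmetric])
  then show ?thesis
    using convex_sum[of I "{0..B}" "\<lambda>i. lam i / (\<Sum>k\<in>I. lam k)" g] assms
    by (simp add: less_imp_le sum_nonneg)
qed

lemma ths_V_bounded: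
  fixes M :: real
  assumes "finite I" "\<forall>i\<in>I. 0 < lam i" "valid_order I E w ord"
    and "\<forall>(i, j)\<in>E. w i j \<le> M" "\<forall>j. st j \<in> {0..M}"
  shows "ths_V I J lam w x ord n st \<in> {0..card J * M}"
  using assms(5)
proof (induction n arbitrary: st)
  case 0
  then show ?case
    by (auto intro: sum_nonneg sum_bounded_above)
next
  case (Suc n)
  have "0 \<le> M"
    using Suc.prems by fastforce
  have "integral {0..lam i / 2} (\<lambda>\<theta>. ths_V I J lam w x ord n (ths_step w x ord st i \<theta>)) / (lam i / 2)
      \<in> {0..card J * M}" if "i \<in> I" for i
    using that assms(2) ths_step_bounded[OF assms(3) that assms(4) Suc.prems]
    by (intro integral_average_in_interval Suc.IH) auto
  then show ?case
    unfolding ths_V.simps using \<open>0 \<le> M\<close> by (intro weighted_average_in_interval assms(1,2)) auto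
qed

lemma poisson_mixture_has_derivative_at_0:
  fixes V :: "nat \<Rightarrow> real"
  assumes "\<And>n. \<bar>V n\<bar> \<le> B"
  shows "((\<lambda>t. \<Sum>n. exp (- L * t) * (L * t) ^ n / fact n * V n) has_real_derivative L * (V 1 - V 0)) (at 0)"
proof -
  define c where "c n = L ^ n * V n / fact n" for n
  have summable: "summable (\<lambda>n. c n * t ^ n)" for t
  proof (rule summable_comparison_test')
    show "summable (\<lambda>n. B * (inverse (fact n) * \<bar>L * t\<bar> ^ n))"
      by (intro summable_mult summable_exp)
    show "norm (c n * t ^ n) \<le> B * (inverse (fact n) * \<bar>L * t\<bar> ^ n)" for n
      using assms[of n] by (simp add: c_def abs_mult power_abs power_mult_distrib
          divide_right_mono mult_right_mono field_simps)
  qed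
  have "(\<lambda>n. exp (- L * t) * (L * t) ^ n / fact n * V n) = (\<lambda>n. exp (- L * t) * (c n * t ^ n))" for t
    by (simp add: fun_eq_iff c_def power_mult_distrib)
  then have series:
    "(\<lambda>t. \<Sum>n. exp (- L * t) * (L * t) ^ n / fact n * V n) = (\<lambda>t. exp (- L * t) * (\<Sum>n. c n * t ^ n))"
    using suminf_mult[OF summable] by simp
  have series_deriv: "((\<lambda>t. \<Sum>n. c n * t ^ n) has_real_derivative c 1) (at 0)"
    using termdiffs_strong_converges_everywhere[of c 0, OF summable] by (simp add: diffs_def)
  have exp_deriv: "((\<lambda>t. exp (- L * t)) has_real_derivative - L) (at 0)"
    using DERIV_fun_exp[OF DERIV_cmult[OF DERIV_ident, of "- L" 0 UNIV]] by simp
  have "((\<lambda>t. exp (- L * t) * (\<Sum>n. c n * t ^ n)) has_real_derivative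
      - L * (\<Sum>n. c n * 0 ^ n) + c 1 * exp (- L * 0)) (at 0)"
    by (rule DERIV_mult[OF exp_deriv series_deriv])
  moreover have "(\<Sum>n. c n * 0 ^ n) = V 0"
    using powser_zero[of c] by (simp add: c_def)
  ultimately show ?thesis
    unfolding series by (simp add: c_def algebra_simps)
qed

lemma gain_sum_le_top_half:
  assumes "valid_order I E w ord" "i \<in> I" "lp_feasible I J E lam x"
  shows "(\<Sum>j\<in>nbrs E i. gain w st i j * x i j)
    \<le> 2 * integral {0..lam i / 2} (sel_value x i (gain w st i) (ord i st))"
proof -
  define L where "L = ord i st"
  have L: "distinct L" "set L = nbrs E i" "sorted_wrt (\<lambda>a b. gain w st i b \<le> gain w st i a) L"
    using assms(1,2) unfolding valid_order_def L_def by auto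
  have "\<forall>j\<in>set L. 0 \<le> x i j" "(\<Sum>j\<leftarrow>L. x i j) \<le> lam i"
    using assms(2,3) L(2) sum.distinct_set_conv_list[OF L(1), of "x i"]
    unfolding lp_feasible_def by (auto simp: nbrs_def)
  moreover have "\<forall>j\<in>set L. 0 \<le> gain w st i j"
    by (simp add: gain_def)
  ultimately have "(\<Sum>j\<leftarrow>L. gain w st i j * x i j) \<le> 2 * integral {0..lam i / 2} (sel_value x i (gain w st i) L)"
    using L(3) by (intro sel_value_top_half)
  then show ?thesis
    using sum.distinct_set_conv_list[OF L(1), of "\<lambda>j. gain w st i j * x i j"] L(2) by (simp add: L_def)
qed

lemma lp_value_eq_sum_nbrs:
  assumes "finite I" "finite J" "E \<subseteq> I \<times> J"
  shows "lp_value E w x = (\<Sum>i\<in>I. \<Sum>j\<in>nbrs E i. w i j * x i j)"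
proof -
  have E: "E = Sigma I (nbrs E)"
    using assms(3) by (auto simp: nbrs_def)
  have "\<forall>i\<in>I. finite (nbrs E i)"
    using assms(2,3) by (auto intro: finite_subset[of _ J] simp: nbrs_def)
  then show ?thesis
    unfolding lp_value_def by (subst E, subst sum.Sigma[OF assms(1)]) simp_all
qed

lemma lp_value_le_first_arrival:
  fixes w x :: "'i \<Rightarrow> 'j \<Rightarrow> real"
  assumes "finite I" "finite J" "E \<subseteq> I \<times> J" "\<forall>i\<in>I. 0 < lam i"
    and "lp_feasible I J E lam x" "valid_order I E w ord"
  shows "lp_value E w x \<le> (\<Sum>k\<in>I. lam k) * ths_V I J lam w x ord 1 (\<lambda>_. 0)"
proof -
  define st0 :: "'j \<Rightarrow> real" where "st0 = (\<lambda>_. 0)"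
  define T where "T i = integral {0..lam i / 2} (sel_value x i (gain w st0 i) (ord i st0))" for i
  have "(\<Sum>k\<in>I. lam k) * ths_V I J lam w x ord 1 st0 = (\<Sum>i\<in>I. 2 * T i)"
  proof -
    have "ths_V I J lam w x ord 0 (ths_step w x ord st0 i \<theta>) = sel_value x i (gain w st0 i) (ord i st0) \<theta>"
      if "i \<in> I" for i \<theta>
    proof -
      have "set (ord i st0) \<subseteq> J"
        using that assms(3,6) unfolding valid_order_def nbrs_def by blast
      then have "(\<Sum>j\<in>J. ths_step w x ord st0 i \<theta> j)
          = (\<Sum>j\<in>J. st0 j) + sel_value x i (gain w st0 i) (ord i st0) \<theta>"
        by (rule sum_ths_step[OF assms(2)])
      then show ?thesis
        by (simp add: st0_def)
    qed
    moreover have "(\<Sum>k\<in>I. lam k) * (lam i / (\<Sum>k\<in>I. lam k) * (T i / (lam i / 2))) = 2 * T i"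
      if "i \<in> I" for i
    proof -
      have "0 < lam i" "0 < (\<Sum>k\<in>I. lam k)"
        using that assms(4) sum_pos2[OF assms(1) that, of lam] by (auto simp: less_imp_le)
      then show ?thesis
        by (simp add: field_simps)
    qed
    ultimately show ?thesis
      by (simp add: T_def sum_distrib_left)
  qed
  moreover have "(\<Sum>j\<in>nbrs E i. w i j * x i j) \<le> 2 * T i" if "i \<in> I" for i
  proof -
    have "w i j * x i j \<le> gain w st0 i j * x i j" if "j \<in> nbrs E i" for j
      using that assms(5) by (intro mult_right_mono) (auto simp: gain_def st0_def lp_feasible_def nbrs_def)
    then have "(\<Sum>j\<in>nbrs E i. w i j * x i j) \<le> (\<Sum>j\<in>nbrs E i. gain w st0 i j * x i j)"
      by (rule sum_mono)
    also have "\<dots> \<le> 2 * T i"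
      unfolding T_def using gain_sum_le_top_half[OF assms(6) that assms(5)] .
    finally show ?thesis .
  qed
  then have "lp_value E w x \<le> (\<Sum>i\<in>I. 2 * T i)"
    unfolding lp_value_eq_sum_nbrs[OF assms(1-3)] by (rule sum_mono)
  ultimately show ?thesis
    by (simp add: st0_def)
qed

lemma ths_expected_A_has_derivative_at_0:
  fixes w x :: "'i \<Rightarrow> 'j \<Rightarrow> real"
  assumes "finite I" "finite J" "E \<subseteq> I \<times> J" "\<forall>i\<in>I. 0 < lam i" "valid_order I E w ord"
  shows "(ths_expected_A I J lam w x ord has_real_derivative
    (\<Sum>k\<in>I. lam k) * ths_V I J lam w x ord 1 (\<lambda>_. 0)) (at 0)"
proof -
  define M where "M = (\<Sum>(i, j)\<in>E. \<bar>w i j\<bar>)"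
  have "finite E"
    using assms(1-3) finite_subset by blast
  have "w i j \<le> M" if "(i, j) \<in> E" for i j
  proof -
    have "(case (i, j) of (i, j) \<Rightarrow> \<bar>w i j\<bar>) \<le> M"
      unfolding M_def using that \<open>finite E\<close> by (intro member_le_sum) auto
    then show ?thesis
      by simp
  qed
  moreover have "0 \<le> M"
    unfolding M_def by (intro sum_nonneg) auto
  ultimately have "ths_V I J lam w x ord n (\<lambda>_. 0) \<in> {0..card J * M}" for n
    by (intro ths_V_bounded[OF assms(1,4,5)]) auto
  then have "\<bar>ths_V I J lam w x ord n (\<lambda>_. 0)\<bar> \<le> card J * M" for n
    by auto
  then have "(ths_expected_A I J lam w x ord has_real_derivative (\<Sum>k\<in>I. lam k) *
      (ths_V I J lam w x ord 1 (\<lambda>_. 0) - ths_V I J lam w x ord 0 (\<lambda>_. 0))) (at 0)"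
    unfolding ths_expected_A_def Let_def by (rule poisson_mixture_has_derivative_at_0)
  then show ?thesis
    by simp
qed

theorem mainTheorem3:
  fixes I :: "'i set" and J :: "'j set" and E :: "('i \<times> 'j) set"
    and lam :: "'i \<Rightarrow> real" and w x :: "'i \<Rightarrow> 'j \<Rightarrow> real"
    and ord :: "'i \<Rightarrow> ('j \<Rightarrow> real) \<Rightarrow> 'j list"
  assumes "finite I" and "finite J" and "E \<subseteq> I \<times> J"
    and "\<forall>(i, j) \<in> E. 0 < w i j"
    and "\<forall>i \<in> I. 0 < lam i"
    and "lp_optimal I J E lam w x"
    and "valid_order I E w ord"
  shows "\<exists>D. ((\<lambda>t. lp_value E w x - ths_expected_A I J lam w x ord t)
              has_real_derivative D) (at 0 within {0..1})
           \<and> D \<le> - lp_value E w x"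
proof -
  define D where "D = (\<Sum>k\<in>I. lam k) * ths_V I J lam w x ord 1 (\<lambda>_. 0)"
  have "(ths_expected_A I J lam w x ord has_real_derivative D) (at 0)"
    unfolding D_def by (rule ths_expected_A_has_derivative_at_0[OF assms(1-3,5,7)])
  then have "((\<lambda>t. lp_value E w x - ths_expected_A I J lam w x ord t) has_real_derivative 0 - D) (at 0)"
    by (rule DERIV_diff[OF DERIV_const])
  then have "((\<lambda>t. lp_value E w x - ths_expected_A I J lam w x ord t) has_real_derivative - D)
      (at 0 within {0..1})"
    by (simp add: has_field_derivative_at_within)
  moreover have "lp_feasible I J E lam x"
    using assms(6) by (simp add: lp_optimal_def)
  then have "lp_value E w x \<le> D"
    unfolding D_def by (rule lp_value_le_first_arrival[OF assms(1-3,5) _ assms(7)])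
  ultimately show ?thesis
    by (intro exI[of _ "- D"]) simp
qed

end
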